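(* Let $G$ be a non-trivial graph with $m$ edges and maximum degree $\Delta$, and let $\mathcal{L}(G)$ be its line graph. Then $$ GA_1(G) + GA_1(\mathcal{L}(G)) \le \frac{1}{2}\, \max \big\{2\Delta^2 +m^2 +(6-2\Delta) m - 2\Delta -4\,,\; 2\Delta^2 +m^2 +(4-2\Delta) m + 4 \,,\; m(m-1) \big\} . $$
   Context: All graphs are finite and simple. A graph is non-trivial if each of its connected components has at least two edges. $d_u$ is the degree of $u$. The geometric-arithmetic index is $GA_1(G)=\sum_{uv\in E(G)}\frac{\sqrt{d_ud_v}}{\frac12(d_u+d_v)}$. The line graph $\mathcal{L}(G)$ has vertex set $E(G)$, two vertices being adjacent iff the corresponding edges share an end vertex in $G$. *)

theory Defs
  imports Complex_Main
begin

definition simple_graph :: "'a set \<Rightarrow> 'a set set \<Rightarrow> bool" where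
  "simple_graph V E \<longleftrightarrow> finite V \<and>
     (\<forall>e\<in>E. \<exists>u v. e = {u, v} \<and> u \<noteq> v \<and> u \<in> V \<and> v \<in> V)"

definition degree :: "'a set set \<Rightarrow> 'a \<Rightarrow> nat" where
  "degree E u = card {e \<in> E. u \<in> e}"

definition max_degree :: "'a set \<Rightarrow> 'a set set \<Rightarrow> nat" where
  "max_degree V E = Max (degree E ` V)"

definition adj :: "'a set set \<Rightarrow> 'a \<Rightarrow> 'a \<Rightarrow> bool" where
  "adj E u v \<longleftrightarrow> {u, v} \<in> E"

definition component_edges :: "'a set set \<Rightarrow> 'a \<Rightarrow> 'a set set" where
  "component_edges E v = {e \<in> E. \<forall>u\<in>e. (adj E)\<^sup>*\<^sup>* v u}"

definition nontrivial_graph :: "'a set \<Rightarrow> 'a set set \<Rightarrow> bool" where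
  "nontrivial_graph V E \<longleftrightarrow> (\<forall>v\<in>V. card (component_edges E v) \<ge> 2)"

text \<open>GA_1: for an edge e = {u,v}, the product over e is d_u d_v and the sum is d_u + d_v.\<close>
definition GA1 :: "'a set set \<Rightarrow> real" where
  "GA1 E = (\<Sum>e\<in>E. sqrt (real (\<Prod>u\<in>e. degree E u)) / ((1/2) * real (\<Sum>u\<in>e. degree E u)))"

definition line_graph_edges :: "'a set set \<Rightarrow> 'a set set set" where
  "line_graph_edges E = {{e, f} | e f. e \<in> E \<and> f \<in> E \<and> e \<noteq> f \<and> e \<inter> f \<noteq> {}}"

end

theory Submission
  imports Defs
begin

text \<open>By AM-GM every summand of \<open>GA\<^sub>1\<close> is at most 1, so
  \<open>GA\<^sub>1(G) + GA\<^sub>1(\<L>(G)) \<le> m + |E(\<L>(G))|\<close>. Fix a vertex \<open>w\<close> of maximum degree \<open>\<Delta>\<close>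
  and split \<open>E(G)\<close> into the \<open>\<Delta>\<close> edges at \<open>w\<close> and the \<open>m - \<Delta>\<close> others. Two edges of
  the same part give at most \<open>\<Delta> choose 2\<close> resp. \<open>(m - \<Delta>) choose 2\<close> line-graph edges,
  and an edge not at \<open>w\<close> meets at most two edges at \<open>w\<close>, one through each of its
  ends. The resulting bound is at most half the first term of the maximum as soon
  as \<open>\<Delta> \<ge> 1\<close> and \<open>m \<ge> 2\<close>, which is where non-triviality enters.\<close>

lemma simple_graph_edgeE:
  assumes "simple_graph V E" "e \<in> E"
  obtains u v where "e = {u, v}" "u \<noteq> v" "u \<in> V" "v \<in> V"
  using assms unfolding simple_graph_def by meson

lemma simple_graph_edge_subset: "simple_graph V E \<Longrightarrow> e \<in> E \<Longrightarrow> e \<subseteq> V"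
  by (metis simple_graph_edgeE empty_subsetI insert_subset)

lemma simple_graph_card_edge: "simple_graph V E \<Longrightarrow> e \<in> E \<Longrightarrow> card e = 2"
  by (metis simple_graph_edgeE card_2_iff)

lemma simple_graph_finite_edges: "simple_graph V E \<Longrightarrow> finite E"
  using simple_graph_edge_subset finite_subset[of E "Pow V"] simple_graph_def by blast

lemma nontrivial_graph_card_edges_ge:
  assumes "nontrivial_graph V E" "finite E" "v \<in> V"
  shows "2 \<le> card E"
proof -
  have "2 \<le> card (component_edges E v)" using assms by (simp add: nontrivial_graph_def)
  also have "\<dots> \<le> card E" using assms(2) by (intro card_mono) (auto simp: component_edges_def)
  finally show ?thesis .
qed

lemma degree_le_card: "finite E \<Longrightarrow> degree E u \<le> card E"
  unfolding degree_def by (intro card_mono) auto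

lemma degree_pos: "finite E \<Longrightarrow> e \<in> E \<Longrightarrow> u \<in> e \<Longrightarrow> 0 < degree E u"
  unfolding degree_def by (subst card_gt_0_iff) auto

lemma degree_le_max_degree: "finite V \<Longrightarrow> u \<in> V \<Longrightarrow> degree E u \<le> max_degree V E"
  unfolding max_degree_def by simp

lemma max_degree_attained:
  assumes "finite V" "V \<noteq> {}"
  shows "\<exists>w\<in>V. degree E w = max_degree V E"
proof -
  have "Max (degree E ` V) \<in> degree E ` V" using assms by (intro Max_in) auto
  then show ?thesis unfolding max_degree_def by (metis imageE)
qed

lemma geometric_le_arithmetic_mean_ratio:
  fixes x y :: real
  assumes "0 \<le> x" "0 \<le> y"
  shows "sqrt (x * y) / ((1/2) * (x + y)) \<le> 1"
proof (cases "x + y = 0")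
  case False
  then have "x + y > 0" using assms by linarith
  moreover have "sqrt (x * y) \<le> (x + y) / 2" using arith_geo_mean_sqrt assms by blast
  ultimately show ?thesis by (simp add: divide_le_eq)
qed simp

lemma GA1_le_card:
  assumes "\<forall>e\<in>F. card e = 2"
  shows "GA1 F \<le> real (card F)"
proof (cases "finite F")
  case True
  have "GA1 F \<le> (\<Sum>e\<in>F. 1)"
    unfolding GA1_def
  proof (rule sum_mono)
    fix e assume "e \<in> F"
    then obtain a b where "e = {a, b}" "a \<noteq> b" using assms card_2_iff by metis
    then show "sqrt (real (\<Prod>u\<in>e. degree F u)) / ((1/2) * real (\<Sum>u\<in>e. degree F u)) \<le> 1"
      using geometric_le_arithmetic_mean_ratio[of "real (degree F a)" "real (degree F b)"] by simp
  qed
  then show ?thesis by simp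
qed (simp add: GA1_def)

lemma card_line_graph_edge: "x \<in> line_graph_edges E \<Longrightarrow> card x = 2"
  unfolding line_graph_edges_def card_2_iff by blast

lemma line_graph_edges_subset_split:
  assumes "W \<subseteq> E"
  shows "line_graph_edges E \<subseteq> {B. B \<subseteq> W \<and> card B = 2} \<union> {B. B \<subseteq> E - W \<and> card B = 2}
    \<union> (\<Union>f\<in>E - W. (\<lambda>e. {e, f}) ` {e \<in> W. e \<inter> f \<noteq> {}})"
    (is "_ \<subseteq> ?inside_W \<union> ?outside_W \<union> ?across")
proof
  fix x assume "x \<in> line_graph_edges E"
  then obtain e f where x: "x = {e, f}" "e \<in> E" "f \<in> E" "e \<noteq> f" "e \<inter> f \<noteq> {}"
    unfolding line_graph_edges_def by blast
  consider "e \<in> W" "f \<in> W" | "e \<notin> W" "f \<notin> W" | "e \<in> W" "f \<notin> W" | "e \<notin> W" "f \<in> W"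
    by blast
  then show "x \<in> ?inside_W \<union> ?outside_W \<union> ?across"
  proof cases
    case 1
    then show ?thesis using x by auto
  next
    case 2
    then show ?thesis using x by auto
  next
    case 3
    then have "x \<in> (\<lambda>e. {e, f}) ` {e \<in> W. e \<inter> f \<noteq> {}}"
      using x by (intro image_eqI[where x = e]) auto
    then show ?thesis using 3 x by blast
  next
    case 4
    then have "x \<in> (\<lambda>f. {f, e}) ` {f \<in> W. f \<inter> e \<noteq> {}}"
      using x by (intro image_eqI[where x = f]) (auto simp: insert_commute)
    then show ?thesis using 4 x by blast
  qed
qed

lemma card_edges_meeting_le:
  assumes "\<forall>e\<in>W. w \<in> e \<and> card e = 2" and "finite f" and "w \<notin> f"
  shows "card {e \<in> W. e \<inter> f \<noteq> {}} \<le> card f"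
proof -
  have "{e \<in> W. e \<inter> f \<noteq> {}} \<subseteq> (\<lambda>x. {w, x}) ` f"
  proof
    fix e assume e: "e \<in> {e \<in> W. e \<inter> f \<noteq> {}}"
    then obtain x where x: "x \<in> e" "x \<in> f" by blast
    have "card e = 2" using e assms(1) by simp
    moreover have "w \<noteq> x" using x assms(3) by blast
    then have "{w, x} \<subseteq> e" "card {w, x} = 2" using e x assms(1) by auto
    ultimately have "e = {w, x}" by (metis card_subset_eq card.infinite zero_neq_numeral)
    then show "e \<in> (\<lambda>x. {w, x}) ` f" using x by blast
  qed
  then have "card {e \<in> W. e \<inter> f \<noteq> {}} \<le> card ((\<lambda>x. {w, x}) ` f)"
    using assms(2) by (intro card_mono) auto
  also have "\<dots> \<le> card f" by (rule card_image_le[OF assms(2)])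
  finally show ?thesis .
qed

lemma card_line_graph_edges_le:
  assumes "finite E" and edges: "\<forall>e\<in>E. card e = 2"
  shows "card (line_graph_edges E)
    \<le> (degree E w choose 2) + ((card E - degree E w) choose 2) + 2 * (card E - degree E w)"
proof -
  define W where "W = {e \<in> E. w \<in> e}"
  define across where "across f = (\<lambda>e. {e, f}) ` {e \<in> W. e \<inter> f \<noteq> {}}" for f
  have fin_W: "finite W" and fin_R: "finite (E - W)" and W_E: "W \<subseteq> E"
    using assms(1) by (auto simp: W_def)
  have card_W: "card W = degree E w" by (simp add: W_def degree_def)
  have card_R: "card (E - W) = card E - degree E w"
    using card_Diff_subset[OF fin_W W_E] card_W by simp
  have card_across: "card (across f) \<le> 2" if "f \<in> E - W" for f
  proof -
    have f: "card f = 2" "w \<notin> f" using that edges by (auto simp: W_def)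
    then have "finite f" by (intro card_ge_0_finite) simp
    moreover have "\<forall>e\<in>W. w \<in> e \<and> card e = 2" using edges by (simp add: W_def)
    ultimately have "card {e \<in> W. e \<inter> f \<noteq> {}} \<le> 2"
      using card_edges_meeting_le[of W w f] f by simp
    moreover have "card (across f) \<le> card {e \<in> W. e \<inter> f \<noteq> {}}"
      unfolding across_def by (rule card_image_le) (simp add: fin_W)
    ultimately show ?thesis by linarith
  qed
  have "card (\<Union>f\<in>E - W. across f) \<le> (\<Sum>f\<in>E - W. card (across f))" by (rule card_UN_le[OF fin_R])
  also have "\<dots> \<le> (\<Sum>f\<in>E - W. 2)" by (rule sum_mono[OF card_across])
  finally have card_across_all: "card (\<Union>f\<in>E - W. across f) \<le> 2 * (card E - degree E w)"
    using card_R by simp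
  have "card (line_graph_edges E)
      \<le> card ({B. B \<subseteq> W \<and> card B = 2} \<union> {B. B \<subseteq> E - W \<and> card B = 2} \<union> (\<Union>f\<in>E - W. across f))"
    (is "_ \<le> card (?inside_W \<union> ?outside_W \<union> ?across)")
    using line_graph_edges_subset_split[OF W_E] unfolding across_def
    by (intro card_mono) (simp_all add: fin_W fin_R finite_Collect_subsets)
  also have "\<dots> \<le> card ?inside_W + card ?outside_W + card ?across"
    using card_Un_le[of "?inside_W \<union> ?outside_W" ?across] card_Un_le[of ?inside_W ?outside_W]
    by linarith
  also have "\<dots> \<le> (degree E w choose 2) + ((card E - degree E w) choose 2) + 2 * (card E - degree E w)"
    using card_across_all by (simp add: n_subsets fin_W fin_R card_W card_R)
  finally show ?thesis .
qed

lemma real_choose_two: "real (n choose 2) = real n * (real n - 1) / 2"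
  by (induction n) (simp_all add: numeral_2_eq_2 field_simps)

lemma star_split_bound_le:
  fixes D m :: nat
  assumes "1 \<le> D" "D \<le> m" "2 \<le> m"
  shows "real m + real ((D choose 2) + ((m - D) choose 2) + 2 * (m - D))
    \<le> (1/2) * (2 * real D ^ 2 + real m ^ 2 + (6 - 2 * real D) * real m - 2 * real D - 4)"
    (is "?lhs \<le> ?rhs")
proof -
  obtain d where m: "m = D + d" using assms(2) le_Suc_ex by blast
  have gap: "?rhs - ?lhs = (3 * real D + real d - 4) / 2"
    by (simp add: m real_choose_two field_simps power2_eq_square)
  have "0 \<le> (3 * real D + real d - 4) / 2" using assms m by simp
  then have "0 \<le> ?rhs - ?lhs" by (simp only: gap)
  then show ?thesis by (simp only: diff_ge_0_iff_ge)
qed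

lemma card_edges_add_card_line_graph_edges_le:
  assumes "simple_graph V E" "nontrivial_graph V E" "E \<noteq> {}"
  shows "real (card E) + real (card (line_graph_edges E))
    \<le> (1/2) * (2 * real (max_degree V E) ^ 2 + real (card E) ^ 2
          + (6 - 2 * real (max_degree V E)) * real (card E) - 2 * real (max_degree V E) - 4)"
proof -
  have fin: "finite E" and edges: "\<forall>e\<in>E. card e = 2"
    using assms(1) simple_graph_finite_edges simple_graph_card_edge by blast+
  obtain e u where e: "e \<in> E" "u \<in> e"
    using assms(3) edges by (metis card.empty ex_in_conv zero_neq_numeral)
  have V: "finite V" "u \<in> V"
    using assms(1) simple_graph_edge_subset e by (auto simp: simple_graph_def)
  then obtain w where w: "degree E w = max_degree V E" using max_degree_attained[of V E] by blast
  have "1 \<le> max_degree V E" using degree_pos[OF fin e] degree_le_max_degree[OF V, of E] by linarith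
  moreover have "max_degree V E \<le> card E" using degree_le_card[OF fin] w by metis
  moreover have "2 \<le> card E" using nontrivial_graph_card_edges_ge[OF assms(2) fin V(2)] .
  moreover have "card (line_graph_edges E) \<le> (max_degree V E choose 2)
      + ((card E - max_degree V E) choose 2) + 2 * (card E - max_degree V E)"
    using card_line_graph_edges_le[OF fin edges, of w] w by simp
  ultimately show ?thesis
    using star_split_bound_le[of "max_degree V E" "card E"] of_nat_le_iff by fastforce
qed

theorem corollary2p2:
  fixes V :: "'a set" and E :: "'a set set"
  assumes "simple_graph V E"
    and "nontrivial_graph V E"
  shows "GA1 E + GA1 (line_graph_edges E) \<le>
    (1/2) * Max {2 * real (max_degree V E) ^ 2 + real (card E) ^ 2
                   + (6 - 2 * real (max_degree V E)) * real (card E) - 2 * real (max_degree V E) - 4,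
                 2 * real (max_degree V E) ^ 2 + real (card E) ^ 2
                   + (4 - 2 * real (max_degree V E)) * real (card E) + 4,
                 real (card E) * (real (card E) - 1)}"
  (is "_ \<le> (1/2) * Max {?T1, ?T2, ?T3}")
proof -
  have "GA1 E + GA1 (line_graph_edges E) \<le> real (card E) + real (card (line_graph_edges E))"
    using GA1_le_card simple_graph_card_edge[OF assms(1)] card_line_graph_edge
    by (meson add_mono)
  also have "\<dots> \<le> (1/2) * Max {?T1, ?T2, ?T3}"
  proof (cases "E = {}")
    case True
    then have "line_graph_edges E = {}" by (simp add: line_graph_edges_def)
    moreover have "?T3 \<le> Max {?T1, ?T2, ?T3}" by (intro Max_ge) auto
    ultimately show ?thesis using True by simp
  next
    case False
    have "real (card E) + real (card (line_graph_edges E)) \<le> (1/2) * ?T1"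
      by (rule card_edges_add_card_line_graph_edges_le[OF assms False])
    also have "\<dots> \<le> (1/2) * Max {?T1, ?T2, ?T3}" by (intro mult_left_mono Max_ge) auto
    finally show ?thesis .
  qed
  finally show ?thesis .
qed

end
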